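(* Let $\Phi=(\phi_1,\dots,\phi_6)$ be an admissible datum, let $\Phi^a=\sum_{j=1}^6(-1)^j\phi_j$, let $\psi_a$ be the solution of $\Delta\psi_a=0$ in $D$, $\psi_a=\Phi^a$ on $\partial D$, and let $p\in D$. Then the conditions \[\int_{\partial D}\Phi^a\Big(\frac{\zeta+p}{\overline p\,\zeta+1}\Big)ds_\zeta=0,\quad \int_{\partial D}\Phi^a\Big(\frac{\zeta+p}{\overline p\,\zeta+1}\Big)\zeta_r\,ds_\zeta=0\ (r=1,2),\] \[\int_{\partial D}\Phi^a\Big(\frac{\zeta+p}{\overline p\,\zeta+1}\Big)\zeta_1^2\,ds_\zeta=0,\quad \int_{\partial D}\Phi^a\Big(\frac{\zeta+p}{\overline p\,\zeta+1}\Big)\zeta_1\zeta_2\,ds_\zeta=0\] (with $\zeta=(\zeta_1,\zeta_2)$) hold if and only if $\psi_a(p)=0$, $\nabla\psi_a(p)=(0,0)$ and $H\psi_a(p)=0$, where $H\psi_a=(\partial^2_{x_ix_j}\psi_a)_{i,j=1,2}$ is the Hessian matrix of $\psi_a$.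
   Context: Let $D=\{x\in\mathbb{R}^2:|x|<1\}$ be the open unit disk; points $(x_1,x_2)\in\mathbb{R}^2$ are identified with complex numbers $x_1+ix_2$, $\overline p$ is complex conjugation, and $ds_\zeta$ is arc length on $\partial D$. A $6$-tuple $\Phi=(\phi_1,\dots,\phi_6)$ is an admissible datum if $\phi_i\in W^{1,\infty}(\partial D)$, $\phi_i\ge 0$, $\phi_i\phi_j=0$ a.e. on $\partial D$ for $i\ne j$, each set $\{\phi_i>0\}\subset\partial D$ is a nonempty open connected arc, and $\sum_{i=1}^6\phi_i$ vanishes at exactly $6$ points of $\partial D$ (the endpoints of these arcs). *)

theory Defs
  imports "HOL-Analysis.Analysis"
begin

text \<open>Points of the plane are complex numbers; the unit circle is sphere 0 1,
  parametrised by arc length via cis on [0, 2 pi].\<close>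

text \<open>Partial derivative of a real function on the plane in direction v
  (v = 1 gives d/dx1, v = i gives d/dx2).\<close>
definition dpart :: "complex \<Rightarrow> (complex \<Rightarrow> real) \<Rightarrow> complex \<Rightarrow> real" where
  "dpart v f x = frechet_derivative f (at x) v"

definition harmonic_on :: "complex set \<Rightarrow> (complex \<Rightarrow> real) \<Rightarrow> bool" where
  "harmonic_on S f \<longleftrightarrow> open S \<and>
     (\<forall>x\<in>S. f differentiable (at x)) \<and>
     (\<forall>v\<in>{1, \<i>}. \<forall>x\<in>S. dpart v f differentiable (at x)) \<and>
     (\<forall>u\<in>{1, \<i>}. \<forall>v\<in>{1, \<i>}. continuous_on S (dpart u (dpart v f))) \<and>
     (\<forall>x\<in>S. dpart 1 (dpart 1 f) x + dpart \<i> (dpart \<i> f) x = 0)"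

definition admissible_datum :: "(nat \<Rightarrow> complex \<Rightarrow> real) \<Rightarrow> bool" where
  "admissible_datum \<phi> \<longleftrightarrow>
     (\<forall>i\<in>{1..6}. (\<exists>C. C-lipschitz_on (sphere 0 1) (\<phi> i))) \<and>
     (\<forall>i\<in>{1..6}. \<forall>z\<in>sphere 0 1. \<phi> i z \<ge> 0) \<and>
     (\<forall>i\<in>{1..6}. \<forall>j\<in>{1..6}. i \<noteq> j \<longrightarrow>
        {\<theta>\<in>{0..2*pi}. \<phi> i (cis \<theta>) * \<phi> j (cis \<theta>) \<noteq> 0} \<in> null_sets lborel) \<and>
     (\<forall>i\<in>{1..6}. let A = {z\<in>sphere 0 1. \<phi> i z > 0} in
        A \<noteq> {} \<and> openin (top_of_set (sphere 0 1)) A \<and> connected A) \<and>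
     card {z\<in>sphere 0 1. (\<Sum>i=1..6. \<phi> i z) = 0} = 6"

definition alt_datum :: "(nat \<Rightarrow> complex \<Rightarrow> real) \<Rightarrow> complex \<Rightarrow> real" where
  "alt_datum \<phi> z = (\<Sum>j=1..6. (-1)^j * \<phi> j z)"

definition dirichlet_solution :: "(complex \<Rightarrow> real) \<Rightarrow> (complex \<Rightarrow> real) \<Rightarrow> bool" where
  "dirichlet_solution g \<psi> \<longleftrightarrow> harmonic_on (ball 0 1) \<psi> \<and>
     continuous_on (cball 0 1) \<psi> \<and> (\<forall>z\<in>sphere 0 1. \<psi> z = g z)"

definition circle_integral :: "(complex \<Rightarrow> real) \<Rightarrow> real" where
  "circle_integral h = integral {0..2*pi} (\<lambda>\<theta>. h (cis \<theta>))"

end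

theory Submission
  imports Defs "HOL-Complex_Analysis.Complex_Analysis"
begin

(* The Dirichlet solution psi is the real part of a holomorphic function H on the disc with
   H' = psi_x - i psi_y: harmonicity and the symmetry of mixed partials are exactly the
   Cauchy-Riemann equations for psi_x - i psi_y. For m(z) = (z + p) / (cnj p * z + 1), the
   function G = H o m is holomorphic on the disc and Re G = psi o m extends continuously to the
   circle, where it equals Phi^a o m. Cauchy's formula on circles of radius r < 1 followed by
   r -> 1 identifies the five moments as 2 pi Re G(0), pi Re G'(0), -pi Im G'(0),
   pi Re G(0) + pi/4 Re G''(0) and -pi/4 Im G''(0), so they all vanish iff psi(p) = Re G(0) = 0
   and G'(0) = G''(0) = 0. Since m(0) = p and m'(0) = 1 - |p|^2 is nonzero, the chain rule turns
   this into H'(p) = H''(p) = 0, i.e. into the vanishing of the gradient and the Hessian of psi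
   at p. *)

section \<open>Symmetry of mixed partial derivatives\<close>

lemma has_derivative_dpart:
  fixes f :: "complex \<Rightarrow> real"
  assumes "f differentiable (at x)"
  shows "(f has_derivative (\<lambda>h. Re h * dpart 1 f x + Im h * dpart \<i> f x)) (at x)"
proof -
  define L where "L = frechet_derivative f (at x)"
  have D: "(f has_derivative L) (at x)"
    using assms frechet_derivative_works L_def by blast
  have "L h = Re h * dpart 1 f x + Im h * dpart \<i> f x" for h
  proof -
    have "L h = L (Re h *\<^sub>R 1 + Im h *\<^sub>R \<i>)"
      by (simp add: complex_eq[symmetric] scaleR_conv_of_real mult.commute)
    also have "\<dots> = Re h *\<^sub>R L 1 + Im h *\<^sub>R L \<i>"
      using has_derivative_linear[OF D] by (simp only: linear_add linear_scale)
    finally show ?thesis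
      by (simp add: dpart_def L_def)
  qed
  then have "L = (\<lambda>h. Re h * dpart 1 f x + Im h * dpart \<i> f x)"
    by (rule ext)
  then show ?thesis
    using D by simp
qed

lemma has_real_derivative_dpart_line:
  fixes f :: "complex \<Rightarrow> real"
  assumes "f differentiable (at (a + of_real t * v))"
  shows "((\<lambda>s. f (a + of_real s * v)) has_real_derivative dpart v f (a + of_real t * v)) (at t)"
proof -
  define w where "w = a + of_real t * v"
  define L where "L = frechet_derivative f (at w)"
  have D: "(f has_derivative L) (at (a + of_real t * v))"
    using assms frechet_derivative_works w_def L_def by blast
  have "((\<lambda>s. a + of_real s * v) has_derivative (\<lambda>h. h *\<^sub>R v)) (at t)"
    by (auto intro!: derivative_eq_intros simp: scaleR_conv_of_real)
  from diff_chain_at[OF this D]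
  have "((\<lambda>s. f (a + of_real s * v)) has_derivative (\<lambda>h. L (h *\<^sub>R v))) (at t)"
    by (simp add: o_def)
  moreover have "(\<lambda>h. L (h *\<^sub>R v)) = (*) (dpart v f w)"
    using linear_scale[OF has_derivative_linear[OF D]] by (simp add: dpart_def L_def fun_eq_iff)
  ultimately show ?thesis
    unfolding has_field_derivative_def w_def by simp
qed

lemma mixed_second_difference_mean_value:
  fixes f :: "complex \<Rightarrow> real"
  assumes "0 < h"
    and df: "\<And>s t. 0 \<le> s \<Longrightarrow> s \<le> h \<Longrightarrow> 0 \<le> t \<Longrightarrow> t \<le> h \<Longrightarrow>
               f differentiable (at (z + of_real s * u + of_real t * v))"
    and ddf: "\<And>s t. 0 \<le> s \<Longrightarrow> s \<le> h \<Longrightarrow> 0 \<le> t \<Longrightarrow> t \<le> h \<Longrightarrow>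
               dpart u f differentiable (at (z + of_real s * u + of_real t * v))"
  obtains x y where "0 < x" "x < h" "0 < y" "y < h"
    "f (z + of_real h * u + of_real h * v) - f (z + of_real h * u) - f (z + of_real h * v) + f z
       = h * h * dpart v (dpart u f) (z + of_real x * u + of_real y * v)"
proof -
  define P where "P s t = z + of_real s * u + of_real t * v" for s t
  have P_u: "P s t = (z + of_real t * v) + of_real s * u"
    and P_v: "P s t = (z + of_real s * u) + of_real t * v" for s t
    by (simp_all add: P_def algebra_simps)
  have "\<exists>x>0. x < h \<and> (f (P h h) - f (P h 0)) - (f (P 0 h) - f (P 0 0))
          = (h - 0) * (dpart u f (P x h) - dpart u f (P x 0))"
  proof (rule MVT2[OF \<open>0 < h\<close>])
    fix s assume "0 \<le> s" "s \<le> h"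
    have "((\<lambda>s. f (P s t)) has_real_derivative dpart u f (P s t)) (at s)"
      if "0 \<le> t" "t \<le> h" for t
    proof -
      have "f differentiable (at ((z + of_real t * v) + of_real s * u))"
        using df[of s t] that \<open>0 \<le> s\<close> \<open>s \<le> h\<close> by (simp add: add_ac)
      then show ?thesis
        unfolding P_u by (rule has_real_derivative_dpart_line)
    qed
    then show "((\<lambda>s. f (P s h) - f (P s 0)) has_real_derivative
                 dpart u f (P s h) - dpart u f (P s 0)) (at s)"
      using \<open>0 < h\<close> by (intro DERIV_diff) auto
  qed
  then obtain x where x: "0 < x" "x < h"
    and Dx: "f (P h h) - f (P h 0) - f (P 0 h) + f (P 0 0) = h * (dpart u f (P x h) - dpart u f (P x 0))"
    by (auto simp: algebra_simps)
  have "\<exists>y>0. y < h \<and> dpart u f (P x h) - dpart u f (P x 0) = (h - 0) * dpart v (dpart u f) (P x y)"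
  proof (rule MVT2[OF \<open>0 < h\<close>])
    fix t assume "0 \<le> t" "t \<le> h"
    then show "((\<lambda>t. dpart u f (P x t)) has_real_derivative dpart v (dpart u f) (P x t)) (at t)"
      unfolding P_v using x by (intro has_real_derivative_dpart_line ddf) auto
  qed
  then obtain y where "0 < y" "y < h"
    and "dpart u f (P x h) - dpart u f (P x 0) = h * dpart v (dpart u f) (P x y)"
    by auto
  with x Dx show ?thesis
    by (intro that[of x y]) (auto simp: P_def)
qed

lemma mixed_dparts_meet:
  fixes f :: "complex \<Rightarrow> real"
  assumes "0 < h"
    and square: "\<And>s t. 0 \<le> s \<Longrightarrow> s \<le> h \<Longrightarrow> 0 \<le> t \<Longrightarrow> t \<le> h \<Longrightarrow>
                   z + of_real s * u + of_real t * v \<in> S"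
    and df: "\<And>x. x \<in> S \<Longrightarrow> f differentiable (at x)"
    and duf: "\<And>x. x \<in> S \<Longrightarrow> dpart u f differentiable (at x)"
    and dvf: "\<And>x. x \<in> S \<Longrightarrow> dpart v f differentiable (at x)"
  obtains x y x' y' where "0 < x" "x < h" "0 < y" "y < h" "0 < x'" "x' < h" "0 < y'" "y' < h"
    and "dpart v (dpart u f) (z + of_real x * u + of_real y * v) =
         dpart u (dpart v f) (z + of_real x' * v + of_real y' * u)"
proof -
  \<comment> \<open>Both mixed partials come from the same second difference, symmetric in \<open>u\<close> and \<open>v\<close>.\<close>
  have square': "z + of_real s * v + of_real t * u \<in> S" if "0 \<le> s" "s \<le> h" "0 \<le> t" "t \<le> h" for s t
    using square[OF that(3,4,1,2)] by (simp add: add_ac)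
  obtain x y where xy: "0 < x" "x < h" "0 < y" "y < h"
    and uv: "f (z + of_real h * u + of_real h * v) - f (z + of_real h * u) - f (z + of_real h * v) + f z
               = h * h * dpart v (dpart u f) (z + of_real x * u + of_real y * v)"
    using mixed_second_difference_mean_value[OF \<open>0 < h\<close>, of f z u v] df duf square by blast
  obtain x' y' where x'y': "0 < x'" "x' < h" "0 < y'" "y' < h"
    and vu: "f (z + of_real h * v + of_real h * u) - f (z + of_real h * v) - f (z + of_real h * u) + f z
               = h * h * dpart u (dpart v f) (z + of_real x' * v + of_real y' * u)"
    using mixed_second_difference_mean_value[OF \<open>0 < h\<close>, of f z v u] df dvf square' by blast
  have "h * h * dpart v (dpart u f) (z + of_real x * u + of_real y * v)
      = f (z + of_real h * u + of_real h * v) - f (z + of_real h * u) - f (z + of_real h * v) + f z"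
    by (rule uv[symmetric])
  also have "\<dots> = f (z + of_real h * v + of_real h * u) - f (z + of_real h * v) - f (z + of_real h * u) + f z"
    by (simp add: add_ac)
  also have "\<dots> = h * h * dpart u (dpart v f) (z + of_real x' * v + of_real y' * u)"
    by (rule vu)
  finally show ?thesis
    using \<open>0 < h\<close> by (intro that[OF xy x'y']) simp
qed

lemma norm_of_real_combination_le:
  fixes u v :: complex
  assumes "0 \<le> s" "s \<le> h" "0 \<le> t" "t \<le> h"
  shows "norm (of_real s * u + of_real t * v) \<le> h * (norm u + norm v)"
proof -
  have "norm (of_real s * u + of_real t * v) \<le> s * norm u + t * norm v"
    using norm_triangle_ineq[of "of_real s * u" "of_real t * v"] assms by (simp add: norm_mult)
  also have "\<dots> \<le> h * (norm u + norm v)"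
    using assms by (simp add: distrib_left add_mono mult_right_mono)
  finally show ?thesis .
qed

lemma dpart_commute:
  fixes f :: "complex \<Rightarrow> real"
  assumes "open S" "z \<in> S"
    and df: "\<And>x. x \<in> S \<Longrightarrow> f differentiable (at x)"
    and duf: "\<And>x. x \<in> S \<Longrightarrow> dpart u f differentiable (at x)"
    and dvf: "\<And>x. x \<in> S \<Longrightarrow> dpart v f differentiable (at x)"
    and cont_vu: "continuous_on S (dpart v (dpart u f))"
    and cont_uv: "continuous_on S (dpart u (dpart v f))"
  shows "dpart v (dpart u f) z = dpart u (dpart v f) z"
proof -
  define b c where "b = dpart v (dpart u f)" and "c = dpart u (dpart v f)"
  have arbitrarily_close: "\<bar>b z - c z\<bar> < e" if "e > 0" for e
  proof -
    define U where "U = b -` ball (b z) (e / 2) \<inter> S \<inter> (c -` ball (c z) (e / 2) \<inter> S)"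
    have "open U" "z \<in> U"
      using cont_vu cont_uv \<open>open S\<close> \<open>z \<in> S\<close> \<open>e > 0\<close>
      by (auto simp: U_def b_def c_def continuous_on_open_vimage)
    then obtain d where "d > 0" "ball z d \<subseteq> U"
      using open_contains_ball by blast
    have "norm u + norm v + 1 > 0"
      by (simp add: add_nonneg_pos)
    define h where "h = d / (norm u + norm v + 1)"
    have "h > 0"
      using \<open>d > 0\<close> \<open>norm u + norm v + 1 > 0\<close> by (simp add: h_def)
    have "h * (norm u + norm v) < h * (norm u + norm v + 1)"
      using \<open>h > 0\<close> by simp
    also have "\<dots> = d"
      using \<open>norm u + norm v + 1 > 0\<close> by (simp add: h_def)
    finally have "h * (norm u + norm v) < d" .
    then have near: "z + of_real s * u + of_real t * v \<in> U" if "0 \<le> s" "s \<le> h" "0 \<le> t" "t \<le> h" for s t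
      using \<open>ball z d \<subseteq> U\<close> norm_of_real_combination_le[OF that, of u v]
        norm_minus_cancel[of "of_real s * u + of_real t * v"]
      by (force simp: dist_norm add.assoc)
    obtain x y x' y' where "0 < x" "x < h" "0 < y" "y < h" "0 < x'" "x' < h" "0 < y'" "y' < h"
      and meet: "b (z + of_real x * u + of_real y * v) = c (z + of_real x' * v + of_real y' * u)"
      using mixed_dparts_meet[OF \<open>h > 0\<close>, of z u v U f] near df duf dvf
      unfolding b_def c_def U_def by blast
    have "z + of_real x * u + of_real y * v \<in> U"
      using near \<open>0 < x\<close> \<open>x < h\<close> \<open>0 < y\<close> \<open>y < h\<close> by simp
    then have "\<bar>b z - b (z + of_real x * u + of_real y * v)\<bar> < e / 2"
      by (simp add: U_def dist_real_def)
    have "z + of_real x' * v + of_real y' * u \<in> U"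
      using near[of y' x'] \<open>0 < x'\<close> \<open>x' < h\<close> \<open>0 < y'\<close> \<open>y' < h\<close> by (simp add: add_ac)
    then have "\<bar>c z - c (z + of_real x' * v + of_real y' * u)\<bar> < e / 2"
      by (simp add: U_def dist_real_def)
    with meet \<open>\<bar>b z - b (z + of_real x * u + of_real y * v)\<bar> < e / 2\<close> show ?thesis
      by linarith
  qed
  have "\<bar>b z - c z\<bar> \<le> 0"
    by (rule field_le_epsilon) (simp add: arbitrarily_close less_imp_le)
  then show ?thesis
    by (simp add: b_def c_def)
qed

section \<open>Harmonic functions as real parts of holomorphic functions\<close>

text \<open>For \<open>\<psi> = Re H\<close> with \<open>H\<close> holomorphic, the Cauchy-Riemann equations give
  \<open>conj_gradient \<psi> = deriv H\<close>.\<close>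
definition conj_gradient :: "(complex \<Rightarrow> real) \<Rightarrow> complex \<Rightarrow> complex" where
  "conj_gradient \<psi> x = of_real (dpart 1 \<psi> x) - \<i> * of_real (dpart \<i> \<psi> x)"

lemma conj_gradient_eq_0_iff: "conj_gradient \<psi> x = 0 \<longleftrightarrow> dpart 1 \<psi> x = 0 \<and> dpart \<i> \<psi> x = 0"
  by (simp add: conj_gradient_def complex_eq_iff)

lemma harmonic_on_dpart_commute:
  assumes "harmonic_on S \<psi>" "x \<in> S"
  shows "dpart \<i> (dpart 1 \<psi>) x = dpart 1 (dpart \<i> \<psi>) x"
  using assms unfolding harmonic_on_def by (intro dpart_commute[of S]) auto

lemma harmonic_on_has_field_derivative_conj_gradient:
  assumes "harmonic_on S \<psi>" "x \<in> S"
  shows "(conj_gradient \<psi> has_field_derivative conj_gradient (dpart 1 \<psi>) x) (at x)"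
proof -
  have "dpart 1 \<psi> differentiable (at x)" "dpart \<i> \<psi> differentiable (at x)"
    using assms unfolding harmonic_on_def by auto
  then have "(conj_gradient \<psi> has_derivative (\<lambda>h.
        of_real (Re h * dpart 1 (dpart 1 \<psi>) x + Im h * dpart \<i> (dpart 1 \<psi>) x)
      - \<i> * of_real (Re h * dpart 1 (dpart \<i> \<psi>) x + Im h * dpart \<i> (dpart \<i> \<psi>) x))) (at x)"
    unfolding conj_gradient_def[abs_def]
    by (intro has_derivative_diff has_derivative_of_real has_derivative_mult_right has_derivative_dpart)
  moreover have "dpart 1 (dpart 1 \<psi>) x + dpart \<i> (dpart \<i> \<psi>) x = 0"
    using assms unfolding harmonic_on_def by blast
  then have "dpart \<i> (dpart \<i> \<psi>) x = - dpart 1 (dpart 1 \<psi>) x"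
    by linarith
  then have "(\<lambda>h. of_real (Re h * dpart 1 (dpart 1 \<psi>) x + Im h * dpart \<i> (dpart 1 \<psi>) x)
      - \<i> * of_real (Re h * dpart 1 (dpart \<i> \<psi>) x + Im h * dpart \<i> (dpart \<i> \<psi>) x))
      = (*) (conj_gradient (dpart 1 \<psi>) x)"
    using harmonic_on_dpart_commute[OF assms]
    by (simp add: conj_gradient_def fun_eq_iff complex_eq_iff algebra_simps)
  ultimately show ?thesis
    by (simp add: has_field_derivative_def)
qed

lemma harmonic_on_convex_Re_holomorphic:
  assumes harm: "harmonic_on S \<psi>" and "convex S"
  obtains H where "\<And>x. x \<in> S \<Longrightarrow> (H has_field_derivative conj_gradient \<psi> x) (at x)"
    and "\<And>x. x \<in> S \<Longrightarrow> \<psi> x = Re (H x)"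
proof -
  have "open S"
    using harm by (simp add: harmonic_on_def)
  have "conj_gradient \<psi> holomorphic_on S"
    using harmonic_on_has_field_derivative_conj_gradient[OF harm]
    by (auto simp: holomorphic_on_open[OF \<open>open S\<close>])
  then obtain G where G_within: "\<And>x. x \<in> S \<Longrightarrow> (G has_field_derivative conj_gradient \<psi> x) (at x within S)"
    using holomorphic_convex_primitive'[OF \<open>convex S\<close> \<open>open S\<close>] by blast
  have G: "(G has_field_derivative conj_gradient \<psi> x) (at x)" if "x \<in> S" for x
    using G_within[OF that] by (simp add: at_within_open[OF that \<open>open S\<close>])
  have "\<exists>c. \<forall>x\<in>S. Re (G x) - \<psi> x = c"
  proof (rule has_derivative_zero_constant[OF \<open>convex S\<close>])
    fix x assume "x \<in> S"
    then have "\<psi> differentiable (at x)"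
      using harm by (simp add: harmonic_on_def)
    with G[OF \<open>x \<in> S\<close>] have "((\<lambda>x. Re (G x) - \<psi> x) has_derivative
        (\<lambda>h. Re (conj_gradient \<psi> x * h) - (Re h * dpart 1 \<psi> x + Im h * dpart \<i> \<psi> x))) (at x)"
      unfolding has_field_derivative_def
      by (intro has_derivative_diff has_derivative_Re has_derivative_dpart)
    moreover have "(\<lambda>h. Re (conj_gradient \<psi> x * h) - (Re h * dpart 1 \<psi> x + Im h * dpart \<i> \<psi> x)) = (\<lambda>h. 0)"
      by (simp add: conj_gradient_def fun_eq_iff)
    ultimately show "((\<lambda>x. Re (G x) - \<psi> x) has_derivative (\<lambda>h. 0)) (at x within S)"
      by (simp add: has_derivative_at_withinI)
  qed
  then obtain c where c: "\<And>x. x \<in> S \<Longrightarrow> Re (G x) - \<psi> x = c"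
    by blast
  show ?thesis
  proof (rule that)
    fix x assume "x \<in> S"
    show "((\<lambda>x. G x - of_real c) has_field_derivative conj_gradient \<psi> x) (at x)"
      using DERIV_diff[OF G[OF \<open>x \<in> S\<close>] DERIV_const[of "of_real c"]] by simp
    show "\<psi> x = Re (G x - of_real c)"
      using c[OF \<open>x \<in> S\<close>] by simp
  qed
qed

lemma harmonic_on_conj_gradients_eq_0_iff:
  assumes "harmonic_on S \<psi>" "x \<in> S"
  shows "conj_gradient \<psi> x = 0 \<and> conj_gradient (dpart 1 \<psi>) x = 0 \<longleftrightarrow>
           dpart 1 \<psi> x = 0 \<and> dpart \<i> \<psi> x = 0 \<and>
           dpart 1 (dpart 1 \<psi>) x = 0 \<and> dpart \<i> (dpart 1 \<psi>) x = 0 \<and>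
           dpart 1 (dpart \<i> \<psi>) x = 0 \<and> dpart \<i> (dpart \<i> \<psi>) x = 0"
proof -
  have "dpart 1 (dpart 1 \<psi>) x + dpart \<i> (dpart \<i> \<psi>) x = 0"
    using assms unfolding harmonic_on_def by blast
  then show ?thesis
    using harmonic_on_dpart_commute[OF assms] unfolding conj_gradient_eq_0_iff by auto
qed

section \<open>Low-order moments of holomorphic functions on circles\<close>

lemma has_contour_integral_circlepath_0_iff:
  "(f has_contour_integral I) (circlepath 0 r) \<longleftrightarrow>
     ((\<lambda>t. \<i> * (f (of_real r * cis t) * (of_real r * cis t))) has_integral I) {0..2*pi}"
proof -
  have "(f has_contour_integral I) (circlepath 0 r) \<longleftrightarrow>
      ((\<lambda>t. f (0 + of_real r * cis t) * of_real r * \<i> * cis t) has_integral I) {0..2*pi}"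
    unfolding circlepath_def by (rule has_contour_integral_part_circlepath_iff) simp
  also have "(\<lambda>t. f (0 + of_real r * cis t) * of_real r * \<i> * cis t)
      = (\<lambda>t. \<i> * (f (of_real r * cis t) * (of_real r * cis t)))"
    by (simp add: fun_eq_iff mult_ac)
  finally show ?thesis .
qed

lemma of_real_mult_cis_power: "(of_real r * cis t) ^ k = of_real (r ^ k) * cis (real k * t)"
  by (simp only: power_mult_distrib Complex.DeMoivre of_real_power)

lemma holomorphic_fourier_coefficient:
  fixes G :: "complex \<Rightarrow> complex"
  assumes hol: "G holomorphic_on ball 0 R" and "0 < r" "r < R"
  shows "((\<lambda>t. G (of_real r * cis t) * cis (- (real k * t))) has_integral
           2 * pi * r ^ k * (deriv ^^ k) G 0 / fact k) {0..2*pi}"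
proof -
  have "continuous_on (cball 0 r) G" "G holomorphic_on ball 0 r"
    using holomorphic_on_imp_continuous_on[OF hol] hol \<open>r < R\<close>
    by (auto elim!: continuous_on_subset holomorphic_on_subset)
  from Cauchy_has_contour_integral_higher_derivative_circlepath[OF this, of 0 k]
  have "((\<lambda>t. \<i> * (G (of_real r * cis t) / (of_real r * cis t) ^ Suc k * (of_real r * cis t)))
          has_integral 2 * pi * \<i> / fact k * (deriv ^^ k) G 0) {0..2*pi}"
    using \<open>0 < r\<close> by (simp add: has_contour_integral_circlepath_0_iff)
  moreover have "\<i> * (G (of_real r * cis t) / (of_real r * cis t) ^ Suc k * (of_real r * cis t))
      = (\<i> / of_real (r ^ k)) * (G (of_real r * cis t) * cis (- (real k * t)))" for t
  proof -
    have "(of_real r * cis t) ^ Suc k = of_real (r ^ k) * cis (real k * t) * (of_real r * cis t)"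
      by (simp only: power_Suc2 of_real_mult_cis_power)
    then show ?thesis
      using \<open>0 < r\<close> unfolding cis_inverse[symmetric] by (simp add: field_simps)
  qed
  ultimately have "((\<lambda>t. (\<i> / of_real (r ^ k)) * (G (of_real r * cis t) * cis (- (real k * t))))
          has_integral 2 * pi * \<i> / fact k * (deriv ^^ k) G 0) {0..2*pi}"
    by simp
  then have "((\<lambda>t. G (of_real r * cis t) * cis (- (real k * t))) has_integral
          (2 * pi * \<i> / fact k * (deriv ^^ k) G 0) / (\<i> / of_real (r ^ k))) {0..2*pi}"
    using \<open>0 < r\<close> by (subst (asm) has_integral_mult_right_iff) auto
  then show ?thesis
    using \<open>0 < r\<close> by (simp add: field_simps)
qed

lemma holomorphic_fourier_coefficient_positive:
  fixes G :: "complex \<Rightarrow> complex"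
  assumes hol: "G holomorphic_on ball 0 R" and "0 < r" "r < R"
  shows "((\<lambda>t. G (of_real r * cis t) * cis (real (Suc m) * t)) has_integral 0) {0..2*pi}"
proof -
  have "(\<lambda>u. G u * u ^ m) holomorphic_on ball 0 R"
    using hol by (intro holomorphic_intros)
  then have "((\<lambda>u. G u * u ^ m) has_contour_integral 0) (circlepath 0 r)"
    using \<open>0 < r\<close> \<open>r < R\<close> by (intro Cauchy_theorem_convex_simple[OF _ convex_ball]) auto
  then have "((\<lambda>t. \<i> * (G (of_real r * cis t) * (of_real r * cis t) ^ m * (of_real r * cis t)))
          has_integral 0) {0..2*pi}"
    by (simp add: has_contour_integral_circlepath_0_iff)
  moreover have "\<i> * (G (of_real r * cis t) * (of_real r * cis t) ^ m * (of_real r * cis t))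
      = (\<i> * of_real (r ^ Suc m)) * (G (of_real r * cis t) * cis (real (Suc m) * t))" for t
  proof -
    have "(of_real r * cis t) ^ m * (of_real r * cis t) = of_real (r ^ Suc m) * cis (real (Suc m) * t)"
      unfolding power_Suc2[symmetric] by (rule of_real_mult_cis_power)
    then show ?thesis
      by (simp only: mult.assoc) (simp only: mult_ac)
  qed
  ultimately have "((\<lambda>t. (\<i> * of_real (r ^ Suc m)) * (G (of_real r * cis t) * cis (real (Suc m) * t)))
      has_integral 0) {0..2*pi}"
    by simp
  then show ?thesis
    using \<open>0 < r\<close> by (subst (asm) has_integral_mult_right_iff) auto
qed

lemma Re_Im_mult_cis_trig:
  fixes a :: complex
  shows "(Re (a * cis (-t)) + Re (a * cis t)) / 2 = Re a * cos t"
    and "(Im (a * cis t) - Im (a * cis (-t))) / 2 = Re a * sin t"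
    and "Re a / 2 + (Re (a * cis (-(2*t))) + Re (a * cis (2*t))) / 4 = Re a * (cos t)\<^sup>2"
    and "(Im (a * cis (2*t)) - Im (a * cis (-(2*t)))) / 4 = Re a * (cos t * sin t)"
proof -
  show "(Re (a * cis (-t)) + Re (a * cis t)) / 2 = Re a * cos t"
    and "(Im (a * cis t) - Im (a * cis (-t))) / 2 = Re a * sin t"
    by (simp_all add: algebra_simps)
  show "Re a / 2 + (Re (a * cis (-(2*t))) + Re (a * cis (2*t))) / 4 = Re a * (cos t)\<^sup>2"
    by (simp add: cos_double_cos) (simp add: field_simps)
  show "(Im (a * cis (2*t)) - Im (a * cis (-(2*t)))) / 4 = Re a * (cos t * sin t)"
    by (simp add: sin_double)
qed

lemma has_integral_Re_holomorphic_circle: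
  fixes G :: "complex \<Rightarrow> complex"
  assumes hol: "G holomorphic_on ball 0 R" and r: "0 < r" "r < R"
  shows "((\<lambda>t. Re (G (of_real r * cis t))) has_integral 2 * pi * Re (G 0)) {0..2*pi}"
    and "((\<lambda>t. Re (G (of_real r * cis t)) * cos t) has_integral pi * r * Re (deriv G 0)) {0..2*pi}"
    and "((\<lambda>t. Re (G (of_real r * cis t)) * sin t) has_integral - pi * r * Im (deriv G 0)) {0..2*pi}"
    and "((\<lambda>t. Re (G (of_real r * cis t)) * (cos t)\<^sup>2) has_integral
           pi * Re (G 0) + pi / 4 * r\<^sup>2 * Re (deriv (deriv G) 0)) {0..2*pi}"
    and "((\<lambda>t. Re (G (of_real r * cis t)) * (cos t * sin t)) has_integral
           - pi / 4 * r\<^sup>2 * Im (deriv (deriv G) 0)) {0..2*pi}"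
proof -
  define g where "g t = G (of_real r * cis t)" for t
  have A0: "(g has_integral 2 * pi * G 0) {0..2*pi}"
    using holomorphic_fourier_coefficient[OF hol r, of 0] by (simp add: g_def[abs_def])
  have A1: "((\<lambda>t. g t * cis (-t)) has_integral 2 * pi * r * deriv G 0) {0..2*pi}"
    using holomorphic_fourier_coefficient[OF hol r, of 1] by (simp add: g_def)
  have A2: "((\<lambda>t. g t * cis (-(2*t))) has_integral pi * r\<^sup>2 * deriv (deriv G) 0) {0..2*pi}"
    using holomorphic_fourier_coefficient[OF hol r, of 2] by (simp add: g_def numeral_2_eq_2 mult.assoc)
  have B1: "((\<lambda>t. g t * cis t) has_integral 0) {0..2*pi}"
    using holomorphic_fourier_coefficient_positive[OF hol r, of 0] by (simp add: g_def)
  have B2: "((\<lambda>t. g t * cis (2*t)) has_integral 0) {0..2*pi}"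
    using holomorphic_fourier_coefficient_positive[OF hol r, of 1] by (simp add: g_def numeral_2_eq_2)
  show "((\<lambda>t. Re (G (of_real r * cis t))) has_integral 2 * pi * Re (G 0)) {0..2*pi}"
    using has_integral_Re[OF A0] by (simp add: g_def)
  have "((\<lambda>t. (Re (g t * cis (-t)) + Re (g t * cis t)) / 2) has_integral
      (Re (2 * pi * r * deriv G 0) + Re 0) / 2) {0..2*pi}"
    by (intro has_integral_divide has_integral_add has_integral_Re A1 B1)
  then show "((\<lambda>t. Re (G (of_real r * cis t)) * cos t) has_integral pi * r * Re (deriv G 0)) {0..2*pi}"
    unfolding Re_Im_mult_cis_trig g_def by (simp add: mult.assoc)
  have "((\<lambda>t. (Im (g t * cis t) - Im (g t * cis (-t))) / 2) has_integral
      (Im 0 - Im (2 * pi * r * deriv G 0)) / 2) {0..2*pi}"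
    by (intro has_integral_divide has_integral_diff has_integral_Im A1 B1)
  then show "((\<lambda>t. Re (G (of_real r * cis t)) * sin t) has_integral - pi * r * Im (deriv G 0)) {0..2*pi}"
    unfolding Re_Im_mult_cis_trig g_def by (simp add: mult.assoc)
  have "((\<lambda>t. Re (g t) / 2 + (Re (g t * cis (-(2*t))) + Re (g t * cis (2*t))) / 4) has_integral
      Re (2 * pi * G 0) / 2 + (Re (pi * r\<^sup>2 * deriv (deriv G) 0) + Re 0) / 4) {0..2*pi}"
    by (intro has_integral_divide has_integral_add has_integral_Re A0 A2 B2)
  then show "((\<lambda>t. Re (G (of_real r * cis t)) * (cos t)\<^sup>2) has_integral
      pi * Re (G 0) + pi / 4 * r\<^sup>2 * Re (deriv (deriv G) 0)) {0..2*pi}"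
    unfolding Re_Im_mult_cis_trig g_def by (simp add: mult.assoc)
  have "((\<lambda>t. (Im (g t * cis (2*t)) - Im (g t * cis (-(2*t)))) / 4) has_integral
      (Im 0 - Im (pi * r\<^sup>2 * deriv (deriv G) 0)) / 4) {0..2*pi}"
    by (intro has_integral_divide has_integral_diff has_integral_Im A2 B2)
  then show "((\<lambda>t. Re (G (of_real r * cis t)) * (cos t * sin t)) has_integral
      - pi / 4 * r\<^sup>2 * Im (deriv (deriv G) 0)) {0..2*pi}"
    unfolding Re_Im_mult_cis_trig g_def by (simp add: mult.assoc)
qed

lemma circle_integral_eq_radial_limit:
  fixes u :: "complex \<Rightarrow> real" and w F :: "real \<Rightarrow> real"
  assumes cont_u: "continuous_on (cball 0 1) u" and cont_w: "continuous_on UNIV w"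
    and interior: "\<And>r. 0 < r \<Longrightarrow> r < 1 \<Longrightarrow>
                     ((\<lambda>t. u (of_real r * cis t) * w t) has_integral F r) {0..2*pi}"
    and lim_F: "(F \<longlongrightarrow> L) (at_left 1)"
  shows "integral {0..2*pi} (\<lambda>t. u (cis t) * w t) = L"
proof -
  define I where "I r = integral (cbox 0 (2*pi)) (\<lambda>t. u (of_real r * cis t) * w t)" for r
  have "continuous_on ({0..1} \<times> cbox 0 (2*pi)) (\<lambda>(r, t). u (of_real r * cis t) * w t)"
  proof -
    have "(\<lambda>z. of_real (fst z) * cis (snd z)) ` ({0..1} \<times> cbox 0 (2*pi)) \<subseteq> cball 0 1"
      by (auto simp: norm_mult)
    then have "continuous_on ({0..1} \<times> cbox 0 (2*pi)) (\<lambda>z. u (of_real (fst z) * cis (snd z)))"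
      by (intro continuous_on_compose2[OF cont_u]) (auto intro!: continuous_intros)
    moreover have "continuous_on ({0..1} \<times> cbox 0 (2*pi)) (\<lambda>z. w (snd z))"
      by (rule continuous_on_compose2[OF cont_w continuous_on_snd]) auto
    ultimately have "continuous_on ({0..1} \<times> cbox 0 (2*pi))
        (\<lambda>z. u (of_real (fst z) * cis (snd z)) * w (snd z))"
      by (rule continuous_on_mult)
    then show ?thesis
      by (simp add: case_prod_beta)
  qed
  then have "continuous_on {0..1} I"
    unfolding I_def by (rule integral_continuous_on_param)
  then have "(I \<longlongrightarrow> I 1) (at 1 within {0..1})"
    by (simp add: continuous_on_def)
  then have "(I \<longlongrightarrow> I 1) (at_left 1)"
    by (simp add: at_within_Icc_at_left)
  moreover have "\<forall>\<^sub>F r in at_left 1. I r = F r"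
    using eventually_at_left_real[OF zero_less_one]
    by eventually_elim (auto simp: I_def cbox_interval integral_unique[OF interior])
  ultimately have "(F \<longlongrightarrow> I 1) (at_left 1)"
    by (rule Lim_transform_eventually)
  then have "I 1 = L"
    using lim_F tendsto_unique[OF trivial_limit_at_left_real] by blast
  then show ?thesis
    by (simp add: I_def cbox_interval)
qed

lemma circle_moments_Re_holomorphic:
  fixes u :: "complex \<Rightarrow> real" and G :: "complex \<Rightarrow> complex"
  assumes cont_u: "continuous_on (cball 0 1) u" and hol: "G holomorphic_on ball 0 1"
    and Re_G: "\<And>z. z \<in> ball 0 1 \<Longrightarrow> u z = Re (G z)"
  shows "circle_integral u = 2 * pi * Re (G 0)"
    and "circle_integral (\<lambda>\<zeta>. u \<zeta> * Re \<zeta>) = pi * Re (deriv G 0)"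
    and "circle_integral (\<lambda>\<zeta>. u \<zeta> * Im \<zeta>) = - pi * Im (deriv G 0)"
    and "circle_integral (\<lambda>\<zeta>. u \<zeta> * (Re \<zeta>)\<^sup>2) = pi * Re (G 0) + pi / 4 * Re (deriv (deriv G) 0)"
    and "circle_integral (\<lambda>\<zeta>. u \<zeta> * (Re \<zeta> * Im \<zeta>)) = - pi / 4 * Im (deriv (deriv G) 0)"
proof -
  have radial: "((\<lambda>t. u (of_real r * cis t) * w t) has_integral I) {0..2*pi}"
    if "0 < r" "r < 1" "((\<lambda>t. Re (G (of_real r * cis t)) * w t) has_integral I) {0..2*pi}" for r w I
  proof -
    have "u (of_real r * cis t) = Re (G (of_real r * cis t))" for t
      using that by (intro Re_G) (simp add: norm_mult)
    then show ?thesis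
      using that(3) by simp
  qed
  have limit: "integral {0..2*pi} (\<lambda>t. u (cis t) * w t) = L"
    if "continuous_on UNIV w"
      and "\<And>r. 0 < r \<Longrightarrow> r < 1 \<Longrightarrow> ((\<lambda>t. Re (G (of_real r * cis t)) * w t) has_integral F r) {0..2*pi}"
      and "(F \<longlongrightarrow> L) (at_left 1)" for w F L
    using that by (intro circle_integral_eq_radial_limit[OF cont_u] radial)
  note Fourier = has_integral_Re_holomorphic_circle[OF hol]
  have "integral {0..2*pi} (\<lambda>t. u (cis t) * 1) = 2 * pi * Re (G 0)"
    by (rule limit[where F = "\<lambda>r. 2 * pi * Re (G 0)"]) (auto simp: Fourier(1))
  moreover have "integral {0..2*pi} (\<lambda>t. u (cis t) * cos t) = pi * Re (deriv G 0)"
    by (rule limit[OF _ Fourier(2)]) (auto intro!: continuous_intros tendsto_eq_intros)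
  moreover have "integral {0..2*pi} (\<lambda>t. u (cis t) * sin t) = - pi * Im (deriv G 0)"
    by (rule limit[OF _ Fourier(3)]) (auto intro!: continuous_intros tendsto_eq_intros)
  moreover have "integral {0..2*pi} (\<lambda>t. u (cis t) * (cos t)\<^sup>2) = pi * Re (G 0) + pi / 4 * Re (deriv (deriv G) 0)"
    by (rule limit[OF _ Fourier(4)]) (auto intro!: continuous_intros tendsto_eq_intros)
  moreover have "integral {0..2*pi} (\<lambda>t. u (cis t) * (cos t * sin t)) = - pi / 4 * Im (deriv (deriv G) 0)"
    by (rule limit[OF _ Fourier(5)]) (auto intro!: continuous_intros tendsto_eq_intros)
  ultimately show "circle_integral u = 2 * pi * Re (G 0)"
    and "circle_integral (\<lambda>\<zeta>. u \<zeta> * Re \<zeta>) = pi * Re (deriv G 0)"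
    and "circle_integral (\<lambda>\<zeta>. u \<zeta> * Im \<zeta>) = - pi * Im (deriv G 0)"
    and "circle_integral (\<lambda>\<zeta>. u \<zeta> * (Re \<zeta>)\<^sup>2) = pi * Re (G 0) + pi / 4 * Re (deriv (deriv G) 0)"
    and "circle_integral (\<lambda>\<zeta>. u \<zeta> * (Re \<zeta> * Im \<zeta>)) = - pi / 4 * Im (deriv (deriv G) 0)"
    by (simp_all add: circle_integral_def)
qed

lemma circle_moments_Re_holomorphic_eq_0_iff:
  fixes u :: "complex \<Rightarrow> real" and G :: "complex \<Rightarrow> complex"
  assumes "continuous_on (cball 0 1) u" "G holomorphic_on ball 0 1"
    and "\<And>z. z \<in> ball 0 1 \<Longrightarrow> u z = Re (G z)"
  shows "(circle_integral u = 0 \<and> circle_integral (\<lambda>\<zeta>. u \<zeta> * Re \<zeta>) = 0 \<and>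
           circle_integral (\<lambda>\<zeta>. u \<zeta> * Im \<zeta>) = 0 \<and> circle_integral (\<lambda>\<zeta>. u \<zeta> * (Re \<zeta>)\<^sup>2) = 0 \<and>
           circle_integral (\<lambda>\<zeta>. u \<zeta> * (Re \<zeta> * Im \<zeta>)) = 0)
         \<longleftrightarrow> Re (G 0) = 0 \<and> deriv G 0 = 0 \<and> deriv (deriv G) 0 = 0"
  using circle_moments_Re_holomorphic[OF assms] by (auto simp: complex_eq_iff)

section \<open>Automorphisms of the disc\<close>

lemma deriv_compose_second:
  fixes f g :: "complex \<Rightarrow> complex"
  assumes "open T" "z \<in> T"
    and g: "\<And>x. x \<in> T \<Longrightarrow> (g has_field_derivative g' x) (at x)"
    and f: "\<And>x. x \<in> T \<Longrightarrow> (f has_field_derivative f' (g x)) (at (g x))"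
    and f': "(f' has_field_derivative f'') (at (g z))"
    and g': "(g' has_field_derivative g'') (at z)"
  shows "deriv (\<lambda>x. f (g x)) z = f' (g z) * g' z"
    and "deriv (deriv (\<lambda>x. f (g x))) z = f'' * (g' z)\<^sup>2 + f' (g z) * g''"
proof -
  have first: "deriv (\<lambda>x. f (g x)) x = f' (g x) * g' x" if "x \<in> T" for x
    using DERIV_chain2[OF f g, OF that that] by (rule DERIV_imp_deriv)
  then show "deriv (\<lambda>x. f (g x)) z = f' (g z) * g' z"
    using \<open>z \<in> T\<close> .
  have "((\<lambda>x. f' (g x) * g' x) has_field_derivative f'' * g' z * g' z + f' (g z) * g'') (at z)"
    using DERIV_mult[OF DERIV_chain2[OF f' g[OF \<open>z \<in> T\<close>]] g'] by (simp add: mult_ac)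
  then have "(deriv (\<lambda>x. f (g x)) has_field_derivative f'' * g' z * g' z + f' (g z) * g'') (at z)"
    by (rule has_field_derivative_transform_within_open[OF _ \<open>open T\<close> \<open>z \<in> T\<close>]) (simp add: first)
  then show "deriv (deriv (\<lambda>x. f (g x))) z = f'' * (g' z)\<^sup>2 + f' (g z) * g''"
    by (simp add: DERIV_imp_deriv power2_eq_square mult_ac)
qed

definition disc_moebius :: "complex \<Rightarrow> complex \<Rightarrow> complex" where
  "disc_moebius p z = (z + p) / (cnj p * z + 1)"

lemma disc_moebius_denominator_nonzero:
  assumes "cmod p < 1" "cmod z \<le> 1"
  shows "cnj p * z + 1 \<noteq> 0"
proof
  assume "cnj p * z + 1 = 0"
  then have "cnj p * z = -1"
    by (simp add: eq_neg_iff_add_eq_0)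
  then have "cmod p * cmod z = 1"
    by (metis complex_mod_cnj norm_minus_cancel norm_mult norm_one)
  moreover have "cmod p * cmod z \<le> cmod p"
    using assms(2) by (simp add: mult_left_le)
  ultimately show False
    using assms(1) by simp
qed

lemma one_minus_norm_disc_moebius_square:
  assumes "cnj p * z + 1 \<noteq> 0"
  shows "1 - (cmod (disc_moebius p z))\<^sup>2 = (1 - (cmod z)\<^sup>2) * ((1 - (cmod p)\<^sup>2) / (cmod (cnj p * z + 1))\<^sup>2)"
proof -
  have "(cmod (cnj p * z + 1))\<^sup>2 - (cmod (z + p))\<^sup>2 = (1 - (cmod z)\<^sup>2) * (1 - (cmod p)\<^sup>2)"
    unfolding cmod_power2 by (simp add: power2_eq_square algebra_simps)
  moreover have "(cmod (disc_moebius p z))\<^sup>2 = (cmod (z + p))\<^sup>2 / (cmod (cnj p * z + 1))\<^sup>2"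
    by (simp add: disc_moebius_def norm_divide power_divide)
  ultimately show ?thesis
    using assms by (simp add: field_simps)
qed

lemma norm_disc_moebius_iff:
  assumes "cmod p < 1" "cmod z \<le> 1"
  shows "cmod (disc_moebius p z) < 1 \<longleftrightarrow> cmod z < 1"
    and "cmod (disc_moebius p z) = 1 \<longleftrightarrow> cmod z = 1"
proof -
  have "cnj p * z + 1 \<noteq> 0"
    using disc_moebius_denominator_nonzero[OF assms] .
  define c where "c = (1 - (cmod p)\<^sup>2) / (cmod (cnj p * z + 1))\<^sup>2"
  have "1 - (cmod p)\<^sup>2 > 0"
    using assms by (simp add: abs_square_less_1)
  then have "c > 0"
    using \<open>cnj p * z + 1 \<noteq> 0\<close> by (simp add: c_def)
  have eq: "1 - (cmod (disc_moebius p z))\<^sup>2 = (1 - (cmod z)\<^sup>2) * c"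
    unfolding c_def by (rule one_minus_norm_disc_moebius_square[OF \<open>cnj p * z + 1 \<noteq> 0\<close>])
  have "0 < 1 - (cmod (disc_moebius p z))\<^sup>2 \<longleftrightarrow> 0 < 1 - (cmod z)\<^sup>2"
    unfolding eq using \<open>c > 0\<close> by (simp add: zero_less_mult_iff)
  moreover have "1 - (cmod (disc_moebius p z))\<^sup>2 = 0 \<longleftrightarrow> 1 - (cmod z)\<^sup>2 = 0"
    unfolding eq using \<open>c > 0\<close> by simp
  ultimately show "cmod (disc_moebius p z) < 1 \<longleftrightarrow> cmod z < 1"
    and "cmod (disc_moebius p z) = 1 \<longleftrightarrow> cmod z = 1"
    using norm_ge_zero[of z] norm_ge_zero[of "disc_moebius p z"]
    by (auto simp: abs_square_less_1 power2_eq_1_iff)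
qed

lemma norm_disc_moebius_le_1: "cmod p < 1 \<Longrightarrow> cmod z \<le> 1 \<Longrightarrow> cmod (disc_moebius p z) \<le> 1"
  using norm_disc_moebius_iff[of p z] by (auto simp: order_le_less)

lemma has_field_derivative_disc_moebius:
  assumes "cnj p * z + 1 \<noteq> 0"
  shows "(disc_moebius p has_field_derivative (1 - cnj p * p) / (cnj p * z + 1)\<^sup>2) (at z)"
proof -
  have "((\<lambda>z. (z + p) / (cnj p * z + 1)) has_field_derivative
      ((1 + 0) * (cnj p * z + 1) - (z + p) * (cnj p * 1 + 0)) / ((cnj p * z + 1) * (cnj p * z + 1))) (at z)"
    by (rule DERIV_divide DERIV_add DERIV_cmult DERIV_ident DERIV_const assms)+
  moreover have "((1 + 0) * (cnj p * z + 1) - (z + p) * (cnj p * 1 + 0)) / ((cnj p * z + 1) * (cnj p * z + 1))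
      = (1 - cnj p * p) / (cnj p * z + 1)\<^sup>2"
    by (simp add: power2_eq_square algebra_simps)
  ultimately show ?thesis
    by (simp add: disc_moebius_def[abs_def])
qed

lemma continuous_on_disc_moebius: "cmod p < 1 \<Longrightarrow> continuous_on (cball 0 1) (disc_moebius p)"
  unfolding disc_moebius_def[abs_def] using disc_moebius_denominator_nonzero
  by (intro continuous_intros) auto

lemma disc_moebius_in_ball: "cmod p < 1 \<Longrightarrow> z \<in> ball 0 1 \<Longrightarrow> disc_moebius p z \<in> ball 0 1"
  using norm_disc_moebius_iff(1)[of p z] by simp

lemma disc_moebius_compose_derivs_eq_0_iff:
  fixes H H' :: "complex \<Rightarrow> complex"
  assumes p: "p \<in> ball 0 1"
    and H: "\<And>x. x \<in> ball 0 1 \<Longrightarrow> (H has_field_derivative H' x) (at x)"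
    and H': "(H' has_field_derivative H'') (at p)"
  shows "(\<lambda>z. H (disc_moebius p z)) holomorphic_on ball 0 1"
    and "deriv (\<lambda>z. H (disc_moebius p z)) 0 = 0 \<and> deriv (deriv (\<lambda>z. H (disc_moebius p z))) 0 = 0
           \<longleftrightarrow> H' p = 0 \<and> H'' = 0"
proof -
  have "cmod p < 1"
    using p by simp
  define m' where "m' z = (1 - cnj p * p) / (cnj p * z + 1)\<^sup>2" for z
  have den: "cnj p * z + 1 \<noteq> 0" if "z \<in> cball 0 1" for z
    using disc_moebius_denominator_nonzero[OF \<open>cmod p < 1\<close>] that by simp
  have m': "(disc_moebius p has_field_derivative m' z) (at z)" if "z \<in> ball 0 1" for z
    unfolding m'_def using den that by (intro has_field_derivative_disc_moebius) simp
  have Hm: "(H has_field_derivative H' (disc_moebius p z)) (at (disc_moebius p z))" if "z \<in> ball 0 1" for z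
    using H disc_moebius_in_ball[OF \<open>cmod p < 1\<close> that] .
  show "(\<lambda>z. H (disc_moebius p z)) holomorphic_on ball 0 1"
    using DERIV_chain2[OF Hm m'] holomorphic_on_open[OF open_ball] by blast
  have "m' holomorphic_on ball 0 1"
    unfolding m'_def using den by (intro holomorphic_intros) auto
  then obtain m'' where m'': "(m' has_field_derivative m'') (at 0)"
    using holomorphic_on_imp_differentiable_at[of m' "ball 0 1" 0] field_differentiable_def by auto
  have "disc_moebius p 0 = p"
    by (simp add: disc_moebius_def)
  have "(H' has_field_derivative H'') (at (disc_moebius p 0))"
    using H' \<open>disc_moebius p 0 = p\<close> by simp
  moreover have "(0::complex) \<in> ball 0 1"
    by simp
  ultimately have chain: "deriv (\<lambda>z. H (disc_moebius p z)) 0 = H' p * m' 0"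
      "deriv (deriv (\<lambda>z. H (disc_moebius p z))) 0 = H'' * (m' 0)\<^sup>2 + H' p * m''"
    using m' Hm m'' \<open>disc_moebius p 0 = p\<close> deriv_compose_second[of "ball 0 1" 0 "disc_moebius p" m' H H' H'' m'']
    by simp_all
  have "(cmod p)\<^sup>2 < 1"
    using \<open>cmod p < 1\<close> by (simp add: abs_square_less_1)
  moreover have "1 - cnj p * p = of_real (1 - (cmod p)\<^sup>2)"
    unfolding of_real_diff complex_norm_square by (simp add: mult.commute)
  ultimately have "1 - cnj p * p \<noteq> 0"
    by (simp only: of_real_eq_0_iff)
  then have "m' 0 \<noteq> 0"
    by (simp add: m'_def)
  \<comment> \<open>The unknown \<open>m''\<close> does not matter: it only multiplies \<open>H' p\<close>.\<close>
  with chain show "deriv (\<lambda>z. H (disc_moebius p z)) 0 = 0 \<and> deriv (deriv (\<lambda>z. H (disc_moebius p z))) 0 = 0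
      \<longleftrightarrow> H' p = 0 \<and> H'' = 0"
    by auto
qed

lemma harmonic_disc_moebius_moments_eq_0_iff:
  fixes \<psi> :: "complex \<Rightarrow> real"
  assumes harm: "harmonic_on (ball 0 1) \<psi>" and cont: "continuous_on (cball 0 1) \<psi>"
    and p: "p \<in> ball 0 1"
  shows "(circle_integral (\<lambda>\<zeta>. \<psi> (disc_moebius p \<zeta>)) = 0 \<and>
          circle_integral (\<lambda>\<zeta>. \<psi> (disc_moebius p \<zeta>) * Re \<zeta>) = 0 \<and>
          circle_integral (\<lambda>\<zeta>. \<psi> (disc_moebius p \<zeta>) * Im \<zeta>) = 0 \<and>
          circle_integral (\<lambda>\<zeta>. \<psi> (disc_moebius p \<zeta>) * (Re \<zeta>)\<^sup>2) = 0 \<and>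
          circle_integral (\<lambda>\<zeta>. \<psi> (disc_moebius p \<zeta>) * (Re \<zeta> * Im \<zeta>)) = 0)
         \<longleftrightarrow> \<psi> p = 0 \<and> conj_gradient \<psi> p = 0 \<and> conj_gradient (dpart 1 \<psi>) p = 0"
proof -
  have "cmod p < 1"
    using p by simp
  obtain H where H: "\<And>x. x \<in> ball 0 1 \<Longrightarrow> (H has_field_derivative conj_gradient \<psi> x) (at x)"
    and Re_H: "\<And>x. x \<in> ball 0 1 \<Longrightarrow> \<psi> x = Re (H x)"
    using harmonic_on_convex_Re_holomorphic[OF harm convex_ball] by blast
  define G where "G z = H (disc_moebius p z)" for z
  note G = disc_moebius_compose_derivs_eq_0_iff[OF p H
      harmonic_on_has_field_derivative_conj_gradient[OF harm p], folded G_def]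
  have "continuous_on (cball 0 1) (\<lambda>\<zeta>. \<psi> (disc_moebius p \<zeta>))"
    using continuous_on_compose2[OF cont continuous_on_disc_moebius[OF \<open>cmod p < 1\<close>]]
      norm_disc_moebius_le_1[OF \<open>cmod p < 1\<close>] by fastforce
  moreover have "\<psi> (disc_moebius p z) = Re (G z)" if "z \<in> ball 0 1" for z
    using Re_H[OF disc_moebius_in_ball[OF \<open>cmod p < 1\<close> that]] by (simp add: G_def)
  moreover have "Re (G 0) = \<psi> p"
    using Re_H[OF p] by (simp add: G_def disc_moebius_def)
  ultimately show ?thesis
    using circle_moments_Re_holomorphic_eq_0_iff[of "\<lambda>\<zeta>. \<psi> (disc_moebius p \<zeta>)" G] G by auto
qed

lemma circle_integral_cong:
  "(\<And>\<zeta>. \<zeta> \<in> sphere 0 1 \<Longrightarrow> f \<zeta> = g \<zeta>) \<Longrightarrow> circle_integral f = circle_integral g"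
  by (simp add: circle_integral_def)

theorem proposition4p3:
  fixes \<phi> :: "nat \<Rightarrow> complex \<Rightarrow> real" and \<psi> :: "complex \<Rightarrow> real" and p :: complex
  assumes "admissible_datum \<phi>"
    and "dirichlet_solution (alt_datum \<phi>) \<psi>"
    and "p \<in> ball 0 1"
  shows "((circle_integral (\<lambda>\<zeta>. alt_datum \<phi> ((\<zeta> + p) / (cnj p * \<zeta> + 1))) = 0 \<and>
           circle_integral (\<lambda>\<zeta>. alt_datum \<phi> ((\<zeta> + p) / (cnj p * \<zeta> + 1)) * Re \<zeta>) = 0 \<and>
           circle_integral (\<lambda>\<zeta>. alt_datum \<phi> ((\<zeta> + p) / (cnj p * \<zeta> + 1)) * Im \<zeta>) = 0 \<and>
           circle_integral (\<lambda>\<zeta>. alt_datum \<phi> ((\<zeta> + p) / (cnj p * \<zeta> + 1)) * (Re \<zeta>)^2) = 0 \<and>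
           circle_integral (\<lambda>\<zeta>. alt_datum \<phi> ((\<zeta> + p) / (cnj p * \<zeta> + 1)) * (Re \<zeta> * Im \<zeta>)) = 0)
         \<longleftrightarrow>
         (\<psi> p = 0 \<and>
          dpart 1 \<psi> p = 0 \<and> dpart \<i> \<psi> p = 0 \<and>
          dpart 1 (dpart 1 \<psi>) p = 0 \<and> dpart \<i> (dpart 1 \<psi>) p = 0 \<and>
          dpart 1 (dpart \<i> \<psi>) p = 0 \<and> dpart \<i> (dpart \<i> \<psi>) p = 0))"
proof -
  have harm: "harmonic_on (ball 0 1) \<psi>" and cont: "continuous_on (cball 0 1) \<psi>"
    and boundary: "\<And>z. z \<in> sphere 0 1 \<Longrightarrow> \<psi> z = alt_datum \<phi> z"
    using assms(2) unfolding dirichlet_solution_def by auto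
  have "alt_datum \<phi> ((\<zeta> + p) / (cnj p * \<zeta> + 1)) = \<psi> (disc_moebius p \<zeta>)" if "\<zeta> \<in> sphere 0 1" for \<zeta>
    using boundary norm_disc_moebius_iff(2)[of p \<zeta>] assms(3) that by (simp add: disc_moebius_def)
  then have "circle_integral (\<lambda>\<zeta>. alt_datum \<phi> ((\<zeta> + p) / (cnj p * \<zeta> + 1)) * w \<zeta>)
      = circle_integral (\<lambda>\<zeta>. \<psi> (disc_moebius p \<zeta>) * w \<zeta>)" for w
    by (intro circle_integral_cong) simp
  from this this[of "\<lambda>_. 1"] show ?thesis
    using harmonic_disc_moebius_moments_eq_0_iff[OF harm cont assms(3)]
      harmonic_on_conj_gradients_eq_0_iff[OF harm assms(3)]
    by simp
qed

end
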